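(* Let $\tau^+\colon\underline{\mathscr{C}}\to\underline{\mathscr{C}}^+$ be a left adjoint of the inclusion functor $\underline{\mathscr{C}}^+\hookrightarrow\underline{\mathscr{C}}$. For $C\in\mathscr{C}$, let $Z_C$ be obtained as follows: choose a distinguished triangle $V\to U\overset{a}{\to}C\to V[1]$ with $U\in\mathcal{U},V\in\mathcal{V}$; choose a distinguished triangle $T[-1]\to S[-1]\overset{b}{\to}U\to T$ with $S\in\mathcal{S},T\in\mathcal{T}$; and choose a distinguished triangle $S[-1]\overset{a\circ b}{\to}C\overset{z_C}{\to}Z_C\to S$. Then the following are equivalent: (1) $\tau^+(C)=0$; (2) $Z_C\in\mathcal{W}$; (3) $C\in\mathcal{U}$.
   Context: $\mathscr{C}$ is a triangulated category with shift $[1]$; subcategories are full, additive, closed under isomorphisms and direct summands. $\mathrm{Ext}^1(X,Y)=\mathscr{C}(X,Y[1])$. $\mathcal{M}\ast\mathcal{N}$ is the full subcategory of objects $C$ admitting a distinguished triangle $M\to C\to N\to M[1]$ with $M\in\mathcal{M}$, $N\in\mathcal{N}$. A cotorsion pair $(\mathcal{U},\mathcal{V})$: $\mathrm{Ext}^1(\mathcal{U},\mathcal{V})=0$ and $\mathscr{C}=\mathcal{U}\ast\mathcal{V}[1]$. Fix a twin cotorsion pair, i.e. cotorsion pairs $(\mathcal{S},\mathcal{T}),(\mathcal{U},\mathcal{V})$ with $\mathrm{Ext}^1(\mathcal{S},\mathcal{V})=0$. Put $\mathcal{W}=\mathcal{T}\cap\mathcal{U}$, $\mathscr{C}^+=\mathcal{W}\ast\mathcal{V}[1]$.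 $\underline{\mathscr{C}}$ and $\underline{\mathscr{C}}^+$ are the ideal quotients of $\mathscr{C}$ and $\mathscr{C}^+$ by morphisms factoring through objects of $\mathcal{W}$ (such a left adjoint $\tau^+$ exists). *)

theory Defs
  imports Main
begin

text \<open>A category with morphisms of type 'm between objects of type 'o,
  given by hom-sets; composition cmp g f means g after f.  Additive structure on
  hom-sets, a shift functor (shO on objects, shM on morphisms), and the class of
  distinguished triangles dist X Y Z f g h for X -f-> Y -g-> Z -h-> X[1].\<close>

record ('o, 'm) tcat =
  Ob    :: "'o set"
  Hom   :: "'o \<Rightarrow> 'o \<Rightarrow> 'm set"
  cmp   :: "'m \<Rightarrow> 'm \<Rightarrow> 'm"
  idm   :: "'o \<Rightarrow> 'm"
  madd  :: "'m \<Rightarrow> 'm \<Rightarrow> 'm"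
  mneg  :: "'m \<Rightarrow> 'm"
  mzero :: "'o \<Rightarrow> 'o \<Rightarrow> 'm"
  shO   :: "'o \<Rightarrow> 'o"
  shM   :: "'m \<Rightarrow> 'm"
  dist  :: "'o \<Rightarrow> 'o \<Rightarrow> 'o \<Rightarrow> 'm \<Rightarrow> 'm \<Rightarrow> 'm \<Rightarrow> bool"

definition is_iso :: "('o,'m) tcat \<Rightarrow> 'o \<Rightarrow> 'o \<Rightarrow> 'm \<Rightarrow> bool" where
  "is_iso K X Y f \<longleftrightarrow> f \<in> Hom K X Y \<and>
     (\<exists>g \<in> Hom K Y X. cmp K g f = idm K X \<and> cmp K f g = idm K Y)"

definition isomorphic :: "('o,'m) tcat \<Rightarrow> 'o \<Rightarrow> 'o \<Rightarrow> bool" where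
  "isomorphic K X Y \<longleftrightarrow> (\<exists>f. is_iso K X Y f)"

definition is_zero_obj :: "('o,'m) tcat \<Rightarrow> 'o \<Rightarrow> bool" where
  "is_zero_obj K Z \<longleftrightarrow> Z \<in> Ob K \<and> idm K Z = mzero K Z Z"

definition is_biprod :: "('o,'m) tcat \<Rightarrow> 'o \<Rightarrow> 'o \<Rightarrow> 'o \<Rightarrow> 'm \<Rightarrow> 'm \<Rightarrow> 'm \<Rightarrow> 'm \<Rightarrow> bool" where
  "is_biprod K A B P i1 i2 p1 p2 \<longleftrightarrow>
     i1 \<in> Hom K A P \<and> i2 \<in> Hom K B P \<and> p1 \<in> Hom K P A \<and> p2 \<in> Hom K P B \<and>
     cmp K p1 i1 = idm K A \<and> cmp K p2 i2 = idm K B \<and>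
     cmp K p1 i2 = mzero K B A \<and> cmp K p2 i1 = mzero K A B \<and>
     madd K (cmp K i1 p1) (cmp K i2 p2) = idm K P"

locale triangulated =
  fixes K :: "('o, 'm) tcat"
  assumes hom_obj: "f \<in> Hom K X Y \<Longrightarrow> X \<in> Ob K \<and> Y \<in> Ob K"
    and idm_hom: "X \<in> Ob K \<Longrightarrow> idm K X \<in> Hom K X X"
    and cmp_hom: "\<lbrakk>f \<in> Hom K X Y; g \<in> Hom K Y Z\<rbrakk> \<Longrightarrow> cmp K g f \<in> Hom K X Z"
    and cmp_assoc: "\<lbrakk>f \<in> Hom K X Y; g \<in> Hom K Y Z; h \<in> Hom K Z W\<rbrakk>
        \<Longrightarrow> cmp K h (cmp K g f) = cmp K (cmp K h g) f"
    and idm_left: "f \<in> Hom K X Y \<Longrightarrow> cmp K (idm K Y) f = f"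
    and idm_right: "f \<in> Hom K X Y \<Longrightarrow> cmp K f (idm K X) = f"
    and zero_hom: "\<lbrakk>X \<in> Ob K; Y \<in> Ob K\<rbrakk> \<Longrightarrow> mzero K X Y \<in> Hom K X Y"
    and add_hom: "\<lbrakk>f \<in> Hom K X Y; g \<in> Hom K X Y\<rbrakk> \<Longrightarrow> madd K f g \<in> Hom K X Y"
    and neg_hom: "f \<in> Hom K X Y \<Longrightarrow> mneg K f \<in> Hom K X Y"
    and add_assoc: "\<lbrakk>f \<in> Hom K X Y; g \<in> Hom K X Y; h \<in> Hom K X Y\<rbrakk>
        \<Longrightarrow> madd K (madd K f g) h = madd K f (madd K g h)"
    and add_comm: "\<lbrakk>f \<in> Hom K X Y; g \<in> Hom K X Y\<rbrakk> \<Longrightarrow> madd K f g = madd K g f"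
    and add_zero: "f \<in> Hom K X Y \<Longrightarrow> madd K f (mzero K X Y) = f"
    and add_neg: "f \<in> Hom K X Y \<Longrightarrow> madd K f (mneg K f) = mzero K X Y"
    and cmp_add_left: "\<lbrakk>f \<in> Hom K X Y; g \<in> Hom K X Y; h \<in> Hom K Y Z\<rbrakk>
        \<Longrightarrow> cmp K h (madd K f g) = madd K (cmp K h f) (cmp K h g)"
    and cmp_add_right: "\<lbrakk>f \<in> Hom K Y Z; g \<in> Hom K Y Z; h \<in> Hom K X Y\<rbrakk>
        \<Longrightarrow> cmp K (madd K f g) h = madd K (cmp K f h) (cmp K g h)"
    and zero_obj_ex: "\<exists>Z. is_zero_obj K Z"
    and biprod_ex: "\<lbrakk>A \<in> Ob K; B \<in> Ob K\<rbrakk> \<Longrightarrow> \<exists>P i1 i2 p1 p2. is_biprod K A B P i1 i2 p1 p2"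
    and sh_obj: "X \<in> Ob K \<Longrightarrow> shO K X \<in> Ob K"
    and sh_hom_bij: "\<lbrakk>X \<in> Ob K; Y \<in> Ob K\<rbrakk> \<Longrightarrow>
        bij_betw (shM K) (Hom K X Y) (Hom K (shO K X) (shO K Y))"
    and sh_cmp: "\<lbrakk>f \<in> Hom K X Y; g \<in> Hom K Y Z\<rbrakk> \<Longrightarrow> shM K (cmp K g f) = cmp K (shM K g) (shM K f)"
    and sh_idm: "X \<in> Ob K \<Longrightarrow> shM K (idm K X) = idm K (shO K X)"
    and sh_add: "\<lbrakk>f \<in> Hom K X Y; g \<in> Hom K X Y\<rbrakk> \<Longrightarrow> shM K (madd K f g) = madd K (shM K f) (shM K g)"
    and sh_ess_surj: "Y \<in> Ob K \<Longrightarrow> \<exists>X \<in> Ob K. isomorphic K (shO K X) Y"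
    and dist_hom: "dist K X Y Z f g h \<Longrightarrow>
        f \<in> Hom K X Y \<and> g \<in> Hom K Y Z \<and> h \<in> Hom K Z (shO K X)"
    and TR1_iso: "\<lbrakk>dist K X Y Z f g h; f' \<in> Hom K X' Y'; g' \<in> Hom K Y' Z'; h' \<in> Hom K Z' (shO K X');
        is_iso K X X' u; is_iso K Y Y' v; is_iso K Z Z' w;
        cmp K f' u = cmp K v f; cmp K g' v = cmp K w g; cmp K h' w = cmp K (shM K u) h\<rbrakk>
        \<Longrightarrow> dist K X' Y' Z' f' g' h'"
    and TR1_id: "\<lbrakk>X \<in> Ob K; is_zero_obj K Z\<rbrakk>
        \<Longrightarrow> dist K X X Z (idm K X) (mzero K X Z) (mzero K Z (shO K X))"
    and TR1_ex: "f \<in> Hom K X Y \<Longrightarrow> \<exists>Z g h. dist K X Y Z f g h"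
    and TR2: "\<lbrakk>f \<in> Hom K X Y; g \<in> Hom K Y Z; h \<in> Hom K Z (shO K X)\<rbrakk> \<Longrightarrow>
        dist K X Y Z f g h \<longleftrightarrow> dist K Y Z (shO K X) g h (mneg K (shM K f))"
    and TR3: "\<lbrakk>dist K X Y Z f g h; dist K X' Y' Z' f' g' h';
        u \<in> Hom K X X'; v \<in> Hom K Y Y'; cmp K f' u = cmp K v f\<rbrakk>
        \<Longrightarrow> \<exists>w \<in> Hom K Z Z'. cmp K w g = cmp K g' v \<and> cmp K (shM K u) h = cmp K h' w"
    and TR4: "\<lbrakk>dist K X Y Z' f i i'; dist K Y Z X' g j j'; dist K X Z Y' (cmp K g f) k k'\<rbrakk>
        \<Longrightarrow> \<exists>u v. dist K Z' Y' X' u v (cmp K (shM K i) j') \<and>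
             cmp K u i = cmp K k g \<and> cmp K k' u = i' \<and>
             cmp K v k = j \<and> cmp K j' v = cmp K (shM K f) k'"

definition subcat :: "('o,'m) tcat \<Rightarrow> 'o set \<Rightarrow> bool" where
  "subcat K S \<longleftrightarrow> S \<subseteq> Ob K \<and>
     (\<forall>X Y. X \<in> S \<and> isomorphic K X Y \<longrightarrow> Y \<in> S) \<and>
     (\<exists>Z \<in> S. is_zero_obj K Z) \<and>
     (\<forall>A B P i1 i2 p1 p2. is_biprod K A B P i1 i2 p1 p2 \<longrightarrow> (P \<in> S \<longleftrightarrow> A \<in> S \<and> B \<in> S))"

definition shift_sub :: "('o,'m) tcat \<Rightarrow> 'o set \<Rightarrow> 'o set" where
  "shift_sub K M = {N. \<exists>X \<in> M. isomorphic K (shO K X) N}"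

definition ext_star :: "('o,'m) tcat \<Rightarrow> 'o set \<Rightarrow> 'o set \<Rightarrow> 'o set" where
  "ext_star K M N = {C. \<exists>A B f g h. A \<in> M \<and> B \<in> N \<and> dist K A C B f g h}"

definition ext1_zero :: "('o,'m) tcat \<Rightarrow> 'o set \<Rightarrow> 'o set \<Rightarrow> bool" where
  "ext1_zero K M N \<longleftrightarrow> (\<forall>X \<in> M. \<forall>Y \<in> N. Hom K X (shO K Y) = {mzero K X (shO K Y)})"

definition cotorsion_pair :: "('o,'m) tcat \<Rightarrow> 'o set \<Rightarrow> 'o set \<Rightarrow> bool" where
  "cotorsion_pair K U V \<longleftrightarrow> subcat K U \<and> subcat K V \<and> ext1_zero K U V \<and>
     Ob K = ext_star K U (shift_sub K V)"

definition twin_cotorsion_pair ::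
  "('o,'m) tcat \<Rightarrow> 'o set \<Rightarrow> 'o set \<Rightarrow> 'o set \<Rightarrow> 'o set \<Rightarrow> bool" where
  "twin_cotorsion_pair K S T U V \<longleftrightarrow>
     cotorsion_pair K S T \<and> cotorsion_pair K U V \<and> ext1_zero K S V"

definition factors_through :: "('o,'m) tcat \<Rightarrow> 'o set \<Rightarrow> 'o \<Rightarrow> 'o \<Rightarrow> 'm \<Rightarrow> bool" where
  "factors_through K W X Y f \<longleftrightarrow>
     (\<exists>Wo \<in> W. \<exists>p \<in> Hom K X Wo. \<exists>q \<in> Hom K Wo Y. f = cmp K q p)"

definition quot_eq :: "('o,'m) tcat \<Rightarrow> 'o set \<Rightarrow> 'o \<Rightarrow> 'o \<Rightarrow> 'm \<Rightarrow> 'm \<Rightarrow> bool" where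
  "quot_eq K W X Y f g \<longleftrightarrow> factors_through K W X Y (madd K f (mneg K g))"

definition quot_zero_obj :: "('o,'m) tcat \<Rightarrow> 'o set \<Rightarrow> 'o \<Rightarrow> bool" where
  "quot_zero_obj K W X \<longleftrightarrow> X \<in> Ob K \<and> quot_eq K W X X (idm K X) (mzero K X X)"

text \<open>(tau, eta) is a left adjoint of the inclusion of the quotient of the full
  subcategory Cp into the quotient of the whole category (both by W), given by
  its object map tau and unit eta (universal arrows).\<close>
definition left_adjoint_incl ::
  "('o,'m) tcat \<Rightarrow> 'o set \<Rightarrow> 'o set \<Rightarrow> ('o \<Rightarrow> 'o) \<Rightarrow> ('o \<Rightarrow> 'm) \<Rightarrow> bool" where
  "left_adjoint_incl K W Cp tau eta \<longleftrightarrow>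
     (\<forall>C \<in> Ob K. tau C \<in> Cp \<and> eta C \<in> Hom K C (tau C) \<and>
        (\<forall>X \<in> Cp. \<forall>f \<in> Hom K C X.
           \<exists>g \<in> Hom K (tau C) X. quot_eq K W C X (cmp K g (eta C)) f \<and>
             (\<forall>g' \<in> Hom K (tau C) X. quot_eq K W C X (cmp K g' (eta C)) f
                 \<longrightarrow> quot_eq K W (tau C) X g' g)))"

end

theory Submission
  imports Defs
begin

text \<open>
  Membership in \<open>\<U>\<close> is detected by the vanishing of all maps into objects \<open>V[1]\<close>,
  \<open>V \<in> \<V>\<close>. If \<open>\<tau>\<^sup>+C\<close> vanishes modulo \<open>\<W>\<close>, every map \<open>C \<rightarrow> V[1]\<close> factors
  modulo \<open>\<W>\<close> through it, and maps from \<open>\<W> \<subseteq> \<U>\<close> to \<open>V[1]\<close> are zero; so \<open>C \<in> \<U>\<close>.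
  Conversely, for \<open>C \<in> \<U>\<close> the unit \<open>C \<rightarrow> \<tau>\<^sup>+C\<close> lifts along \<open>W\<^sub>1 \<rightarrow> \<tau>\<^sup>+C\<close> in a
  triangle \<open>W\<^sub>1 \<rightarrow> \<tau>\<^sup>+C \<rightarrow> V\<^sub>1[1]\<close>, so it factors through \<open>\<W>\<close>, and uniqueness in the
  universal property identifies \<open>id\<close> and \<open>0\<close> on \<open>\<tau>\<^sup>+C\<close> modulo \<open>\<W>\<close>.

  If \<open>Z\<^sub>C \<in> \<U>\<close>, a map \<open>C \<rightarrow> V[1]\<close> kills \<open>a \<circ> b\<close>, which factors through \<open>U \<in> \<U>\<close>, hence
  factors through \<open>z\<^sub>C\<close> and vanishes. If \<open>C \<in> \<U>\<close>, then \<open>Z\<^sub>C\<close> is an extension of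
  \<open>C\<close> and \<open>S \<in> \<S> \<subseteq> \<U>\<close>, so \<open>Z\<^sub>C \<in> \<U>\<close>; and the octahedral axiom for \<open>a \<circ> b\<close> gives a triangle
  \<open>T \<rightarrow> Z\<^sub>C \<rightarrow> V[1]\<close> whose second map vanishes, because \<open>V \<rightarrow> U\<close> is split (as \<open>C \<in> \<U>\<close>)
  and its retraction kills \<open>S[-1] \<rightarrow> U\<close> (as \<open>Ext\<^sup>1(\<S>, \<V>) = 0\<close>). Thus \<open>Z\<^sub>C\<close> is a
  summand of \<open>T \<in> \<T>\<close>.
\<close>

context triangulated
begin

section \<open>Additive structure and the shift\<close>

lemma hom_dom: "f \<in> Hom K X Y \<Longrightarrow> X \<in> Ob K"
  using hom_obj by blast

lemma hom_cod: "f \<in> Hom K X Y \<Longrightarrow> Y \<in> Ob K"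
  using hom_obj by blast

lemma add_idem_eq_zero:
  assumes "f \<in> Hom K X Y" and "madd K f f = f"
  shows "f = mzero K X Y"
proof -
  have n: "mneg K f \<in> Hom K X Y"
    using neg_hom assms(1) by blast
  have "mzero K X Y = madd K (madd K f f) (mneg K f)"
    using add_neg assms by simp
  also have "\<dots> = madd K f (mzero K X Y)"
    using add_assoc[OF assms(1) assms(1) n] add_neg[OF assms(1)] by simp
  finally show ?thesis
    using add_zero[OF assms(1)] by simp
qed

lemma cmp_zero_right:
  assumes "f \<in> Hom K Y Z" and "X \<in> Ob K"
  shows "cmp K f (mzero K X Y) = mzero K X Z"
proof -
  have z: "mzero K X Y \<in> Hom K X Y"
    using zero_hom assms hom_dom by blast
  show ?thesis
    using add_idem_eq_zero[OF cmp_hom[OF z assms(1)]] cmp_add_left[OF z z assms(1)] add_zero[OF z]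
    by simp
qed

lemma cmp_zero_left:
  assumes "f \<in> Hom K X Y" and "Z \<in> Ob K"
  shows "cmp K (mzero K Y Z) f = mzero K X Z"
proof -
  have z: "mzero K Y Z \<in> Hom K Y Z"
    using zero_hom assms hom_cod by blast
  show ?thesis
    using add_idem_eq_zero[OF cmp_hom[OF assms(1) z]] cmp_add_right[OF z z assms(1)] add_zero[OF z]
    by simp
qed

lemma add_zero_left: "f \<in> Hom K X Y \<Longrightarrow> madd K (mzero K X Y) f = f"
  using add_comm[OF zero_hom] add_zero hom_dom hom_cod by metis

lemma neg_unique:
  assumes "f \<in> Hom K X Y" and "g \<in> Hom K X Y" and "madd K f g = mzero K X Y"
  shows "g = mneg K f"
proof -
  have n: "mneg K f \<in> Hom K X Y"
    using neg_hom assms(1) by blast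
  have "g = madd K g (madd K f (mneg K f))"
    using add_zero add_neg assms by simp
  also have "\<dots> = madd K (madd K f g) (mneg K f)"
    using add_assoc[OF assms(2) assms(1) n] add_comm[OF assms(1,2)] by simp
  finally show ?thesis
    using add_zero_left[OF n] assms(3) by simp
qed

lemma neg_neg:
  assumes "f \<in> Hom K X Y"
  shows "mneg K (mneg K f) = f"
  using neg_unique[OF neg_hom[OF assms] assms] add_comm[OF neg_hom[OF assms] assms] add_neg[OF assms]
  by simp

lemma neg_zero:
  assumes "X \<in> Ob K" and "Y \<in> Ob K"
  shows "mneg K (mzero K X Y) = mzero K X Y"
  using neg_unique[OF zero_hom zero_hom] add_zero[OF zero_hom] assms by metis

lemma eq_of_diff_eq_zero:
  assumes "f \<in> Hom K X Y" and "g \<in> Hom K X Y" and "madd K f (mneg K g) = mzero K X Y"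
  shows "f = g"
  using neg_unique[OF assms(1) neg_hom[OF assms(2)] assms(3)] neg_neg assms(1,2) by metis

lemma diff_add_diff:
  assumes "f \<in> Hom K X Y" and "g \<in> Hom K X Y" and "h \<in> Hom K X Y"
  shows "madd K (madd K f (mneg K g)) (madd K g (mneg K h)) = madd K f (mneg K h)"
proof -
  have n: "mneg K g \<in> Hom K X Y" "mneg K h \<in> Hom K X Y"
    using neg_hom assms by blast+
  have "madd K (mneg K g) (madd K g (mneg K h)) = mneg K h"
    using add_assoc[OF n(1) assms(2) n(2)] add_comm[OF n(1) assms(2)] add_neg[OF assms(2)]
      add_zero_left[OF n(2)] by simp
  then show ?thesis
    using add_assoc[OF assms(1) n(1) add_hom[OF assms(2) n(2)]] by simp
qed

lemma cmp_neg_left: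
  assumes "f \<in> Hom K Y Z" and "g \<in> Hom K X Y"
  shows "cmp K (mneg K f) g = mneg K (cmp K f g)"
proof (rule neg_unique)
  show "madd K (cmp K f g) (cmp K (mneg K f) g) = mzero K X Z"
    using cmp_add_right[OF assms(1) neg_hom[OF assms(1)] assms(2)] add_neg[OF assms(1)]
      cmp_zero_left[OF assms(2) hom_cod[OF assms(1)]] by simp
qed (use assms cmp_hom neg_hom in blast)+

lemma cmp_neg_right:
  assumes "f \<in> Hom K Y Z" and "g \<in> Hom K X Y"
  shows "cmp K f (mneg K g) = mneg K (cmp K f g)"
proof (rule neg_unique)
  show "madd K (cmp K f g) (cmp K f (mneg K g)) = mzero K X Z"
    using cmp_add_left[OF assms(2) neg_hom[OF assms(2)] assms(1)] add_neg[OF assms(2)]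
      cmp_zero_right[OF assms(1) hom_dom[OF assms(2)]] by simp
qed (use assms cmp_hom neg_hom in blast)+

lemma cmp_diff_left:
  assumes "f \<in> Hom K X Y" and "g \<in> Hom K X Y" and "h \<in> Hom K Y Z"
  shows "cmp K h (madd K f (mneg K g)) = madd K (cmp K h f) (mneg K (cmp K h g))"
  using cmp_add_left[OF assms(1) neg_hom[OF assms(2)] assms(3)] cmp_neg_right[OF assms(3,2)]
  by simp

lemma cmp_diff_right:
  assumes "f \<in> Hom K Y Z" and "g \<in> Hom K Y Z" and "h \<in> Hom K X Y"
  shows "cmp K (madd K f (mneg K g)) h = madd K (cmp K f h) (mneg K (cmp K g h))"
  using cmp_add_right[OF assms(1) neg_hom[OF assms(2)] assms(3)] cmp_neg_left[OF assms(2,3)]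
  by simp

lemma sh_hom: "f \<in> Hom K X Y \<Longrightarrow> shM K f \<in> Hom K (shO K X) (shO K Y)"
  using bij_betw_apply[OF sh_hom_bij] hom_dom hom_cod by metis

lemma sh_surj:
  assumes "g \<in> Hom K (shO K X) (shO K Y)" and "X \<in> Ob K" and "Y \<in> Ob K"
  shows "\<exists>f \<in> Hom K X Y. g = shM K f"
  using sh_hom_bij[OF assms(2,3)] assms(1) unfolding bij_betw_def by blast

lemma sh_inj:
  assumes "f \<in> Hom K X Y" and "g \<in> Hom K X Y" and "shM K f = shM K g"
  shows "f = g"
  using sh_hom_bij[OF hom_dom[OF assms(1)] hom_cod[OF assms(1)]] assms
  unfolding bij_betw_def inj_on_def by blast

lemma sh_zero:
  assumes "X \<in> Ob K" and "Y \<in> Ob K"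
  shows "shM K (mzero K X Y) = mzero K (shO K X) (shO K Y)"
proof -
  have z: "mzero K X Y \<in> Hom K X Y"
    using zero_hom assms by blast
  show ?thesis
    using add_idem_eq_zero[OF sh_hom[OF z]] sh_add[OF z z] add_zero[OF z] by simp
qed

lemma hom_zero_of_sh_hom_zero:
  assumes "X \<in> Ob K" and "Y \<in> Ob K"
    and "\<forall>\<phi> \<in> Hom K (shO K X) (shO K Y). \<phi> = mzero K (shO K X) (shO K Y)"
  shows "\<forall>\<phi> \<in> Hom K X Y. \<phi> = mzero K X Y"
  using assms(3) sh_hom sh_zero[OF assms(1,2)] sh_inj zero_hom[OF assms(1,2)] by metis

section \<open>Distinguished triangles\<close>

lemma dist_rotate: "dist K X Y Z f g h \<Longrightarrow> dist K Y Z (shO K X) g h (mneg K (shM K f))"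
  using TR2 dist_hom by blast

lemma is_zero_obj_sh:
  assumes "is_zero_obj K Z"
  shows "is_zero_obj K (shO K Z)"
proof -
  have Z: "Z \<in> Ob K" and "idm K Z = mzero K Z Z"
    using assms unfolding is_zero_obj_def by auto
  then show ?thesis
    unfolding is_zero_obj_def using sh_idm[OF Z] sh_zero[OF Z Z] sh_obj[OF Z] by simp
qed

lemma dist_zero_left:
  assumes "X \<in> Ob K" and "is_zero_obj K Z0"
  shows "dist K Z0 X X (mzero K Z0 X) (idm K X) (mzero K X (shO K Z0))"
proof -
  have Z0: "Z0 \<in> Ob K"
    using assms(2) unfolding is_zero_obj_def by blast
  have "mneg K (shM K (mzero K Z0 X)) = mzero K (shO K Z0) (shO K X)"
    using sh_zero[OF Z0 assms(1)] neg_zero sh_obj Z0 assms(1) by simp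
  then show ?thesis
    using TR2[OF zero_hom[OF Z0 assms(1)] idm_hom[OF assms(1)] zero_hom[OF assms(1) sh_obj[OF Z0]]]
      TR1_id[OF assms(1) is_zero_obj_sh[OF assms(2)]] by simp
qed

lemma dist_cmp_zero:
  assumes "dist K X Y Z f g h"
  shows "cmp K g f = mzero K X Z"
proof -
  obtain Z0 where z: "is_zero_obj K Z0"
    using zero_obj_ex by blast
  have f: "f \<in> Hom K X Y"
    using dist_hom assms by blast
  obtain w where "w \<in> Hom K Z0 Z" "cmp K w (mzero K X Z0) = cmp K g f"
    using TR3[OF TR1_id[OF hom_dom[OF f] z] assms idm_hom[OF hom_dom[OF f]] f] by blast
  then show ?thesis
    using cmp_zero_right[OF _ hom_dom[OF f]] by metis
qed

lemma dist_cmp_zero_sh: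
  assumes "dist K X Y Z f g h"
  shows "cmp K (shM K f) h = mzero K Z (shO K Y)"
proof -
  have f: "f \<in> Hom K X Y" and h: "h \<in> Hom K Z (shO K X)"
    using dist_hom assms by auto
  have "mneg K (cmp K (shM K f) h) = mzero K Z (shO K Y)"
    using dist_cmp_zero[OF dist_rotate[OF dist_rotate[OF assms]]] cmp_neg_left[OF sh_hom[OF f] h]
    by simp
  then have "mneg K (mneg K (cmp K (shM K f) h)) = mneg K (mzero K Z (shO K Y))"
    by simp
  then show ?thesis
    using neg_neg[OF cmp_hom[OF h sh_hom[OF f]]] neg_zero[OF hom_dom[OF h] hom_cod[OF sh_hom[OF f]]]
    by simp
qed

lemma dist_weak_cokernel:
  assumes "dist K X Y Z f g h" and "\<phi> \<in> Hom K Y W" and "cmp K \<phi> f = mzero K X W"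
  shows "\<exists>\<psi> \<in> Hom K Z W. cmp K \<psi> g = \<phi>"
proof -
  obtain Z0 where z: "is_zero_obj K Z0"
    using zero_obj_ex by blast
  have f: "f \<in> Hom K X Y"
    using dist_hom assms by blast
  have W: "W \<in> Ob K"
    using hom_cod assms(2) by blast
  have u: "mzero K X Z0 \<in> Hom K X Z0"
    using zero_hom hom_dom[OF f] z unfolding is_zero_obj_def by blast
  have c: "cmp K (mzero K Z0 W) (mzero K X Z0) = cmp K \<phi> f"
    using cmp_zero_left[OF u W] assms(3) by simp
  obtain \<psi> where "\<psi> \<in> Hom K Z W" "cmp K \<psi> g = cmp K (idm K W) \<phi>"
    using TR3[OF assms(1) dist_zero_left[OF W z] u assms(2) c] by blast
  then show ?thesis
    using idm_left assms(2) by auto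
qed

lemma dist_weak_kernel:
  assumes "dist K X Y Z f g h" and "\<phi> \<in> Hom K W Y" and "cmp K g \<phi> = mzero K W Z"
  shows "\<exists>\<psi> \<in> Hom K W X. cmp K f \<psi> = \<phi>"
proof -
  obtain Z0 where z: "is_zero_obj K Z0"
    using zero_obj_ex by blast
  have Z0: "Z0 \<in> Ob K"
    using z unfolding is_zero_obj_def by blast
  have f: "f \<in> Hom K X Y" and g: "g \<in> Hom K Y Z"
    using dist_hom assms by auto
  have W: "W \<in> Ob K"
    using hom_dom assms(2) by blast
  have u: "mzero K W Z0 \<in> Hom K W Z0"
    using zero_hom W Z0 by blast
  have c: "cmp K g \<phi> = cmp K (mzero K Z0 Z) (mzero K W Z0)"
    using cmp_zero_left[OF u hom_cod[OF g]] assms(3) by simp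
  obtain w where w: "w \<in> Hom K (shO K W) (shO K X)"
    "cmp K (shM K \<phi>) (mneg K (shM K (idm K W))) = cmp K (mneg K (shM K f)) w"
    using TR3[OF dist_rotate[OF TR1_id[OF W z]] dist_rotate[OF assms(1)] assms(2)
        zero_hom[OF Z0 hom_cod[OF g]] c] by blast
  have "mneg K (shM K \<phi>) = mneg K (cmp K (shM K f) w)"
    using w(2) sh_idm[OF W] cmp_neg_right[OF sh_hom[OF assms(2)] idm_hom[OF sh_obj[OF W]]]
      idm_right[OF sh_hom[OF assms(2)]] cmp_neg_left[OF sh_hom[OF f] w(1)] by simp
  then have e: "shM K \<phi> = cmp K (shM K f) w"
    using neg_neg[OF sh_hom[OF assms(2)]] neg_neg[OF cmp_hom[OF w(1) sh_hom[OF f]]] by metis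
  obtain \<psi> where \<psi>: "\<psi> \<in> Hom K W X" "w = shM K \<psi>"
    using sh_surj[OF w(1) W hom_dom[OF f]] by blast
  have "shM K \<phi> = shM K (cmp K f \<psi>)"
    using e \<psi> sh_cmp[OF \<psi>(1) f] by simp
  then have "\<phi> = cmp K f \<psi>"
    by (rule sh_inj[OF assms(2) cmp_hom[OF \<psi>(1) f]])
  then show ?thesis
    using \<psi>(1) by blast
qed

section \<open>Split monomorphisms and retracts\<close>

lemma dist_split_mono_of_zero:
  assumes "dist K X Y Z f g (mzero K Z (shO K X))"
  shows "\<exists>r \<in> Hom K Y X. cmp K r f = idm K X"
proof -
  have f: "f \<in> Hom K X Y"
    using dist_hom assms by blast
  have X: "X \<in> Ob K" and Y: "Y \<in> Ob K" and Z: "Z \<in> Ob K"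
    using dist_hom assms hom_dom hom_cod by blast+
  have "cmp K (idm K (shO K X)) (mzero K Z (shO K X)) = mzero K Z (shO K X)"
    using idm_left zero_hom Z sh_obj X by blast
  then obtain \<psi> where \<psi>: "\<psi> \<in> Hom K (shO K Y) (shO K X)"
    "cmp K \<psi> (mneg K (shM K f)) = idm K (shO K X)"
    by (metis dist_weak_cokernel[OF dist_rotate[OF dist_rotate[OF assms]] idm_hom[OF sh_obj[OF X]]])
  obtain r where r: "r \<in> Hom K Y X" "mneg K \<psi> = shM K r"
    using sh_surj[OF neg_hom[OF \<psi>(1)] Y X] by blast
  have "shM K (cmp K r f) = cmp K (mneg K \<psi>) (shM K f)"
    using sh_cmp[OF f r(1)] r(2) by simp
  also have "\<dots> = cmp K \<psi> (mneg K (shM K f))"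
    using cmp_neg_left[OF \<psi>(1) sh_hom[OF f]] cmp_neg_right[OF \<psi>(1) sh_hom[OF f]] by simp
  also have "\<dots> = shM K (idm K X)"
    using \<psi>(2) sh_idm[OF X] by simp
  finally have "shM K (cmp K r f) = shM K (idm K X)" .
  then show ?thesis
    using sh_inj[OF cmp_hom[OF f r(1)] idm_hom[OF X]] r(1) by blast
qed

lemma dist_split_mono_section:
  assumes d: "dist K A B C f g h" and r: "r \<in> Hom K B A" "cmp K r f = idm K A"
  shows "\<exists>s \<in> Hom K C B. cmp K g s = idm K C \<and> cmp K r s = mzero K C A"
proof -
  have f: "f \<in> Hom K A B" and g: "g \<in> Hom K B C" and h: "h \<in> Hom K C (shO K A)"
    using dist_hom d by auto
  have A: "A \<in> Ob K" and C: "C \<in> Ob K"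
    using f g hom_dom hom_cod by blast+
  have "h = cmp K (shM K (cmp K r f)) h"
    using r(2) sh_idm[OF A] idm_left[OF h] by simp
  also have "\<dots> = cmp K (shM K r) (cmp K (shM K f) h)"
    using sh_cmp[OF f r(1)] cmp_assoc[OF h sh_hom[OF f] sh_hom[OF r(1)]] by simp
  also have "\<dots> = mzero K C (shO K A)"
    using dist_cmp_zero_sh[OF d] cmp_zero_right[OF sh_hom[OF r(1)] C] by simp
  finally have "h = mzero K C (shO K A)" .
  then have "cmp K h (idm K C) = mzero K C (shO K A)"
    using idm_right[OF h] by simp
  then obtain s0 where s0: "s0 \<in> Hom K C B" "cmp K g s0 = idm K C"
    using dist_weak_kernel[OF dist_rotate[OF d] idm_hom[OF C]] by blast
  define p where "p = cmp K f (cmp K r s0)"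
  have rs0: "cmp K r s0 \<in> Hom K C A" and p: "p \<in> Hom K C B"
    using cmp_hom s0(1) r(1) f unfolding p_def by blast+
  have gp: "cmp K g p = mzero K C C"
    using cmp_assoc[OF rs0 f g] dist_cmp_zero[OF d] cmp_zero_left[OF rs0 C] unfolding p_def
    by simp
  have rp: "cmp K r p = cmp K r s0"
    using cmp_assoc[OF rs0 f r(1)] r(2) idm_left[OF rs0] unfolding p_def by simp
  have "cmp K g (madd K s0 (mneg K p)) = idm K C"
    using cmp_diff_left[OF s0(1) p g] s0(2) gp neg_zero[OF C C] add_zero[OF idm_hom[OF C]]
    by simp
  moreover have "cmp K r (madd K s0 (mneg K p)) = mzero K C A"
    using cmp_diff_left[OF s0(1) p r(1)] rp add_neg[OF rs0] by simp
  moreover have "madd K s0 (mneg K p) \<in> Hom K C B"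
    using add_hom[OF s0(1) neg_hom[OF p]] .
  ultimately show ?thesis
    by blast
qed

lemma dist_split_mono_biprod:
  assumes d: "dist K A B C f g h"
    and r: "r \<in> Hom K B A" "cmp K r f = idm K A"
    and s: "s \<in> Hom K C B" "cmp K g s = idm K C" "cmp K r s = mzero K C A"
  shows "is_biprod K A C B f s r g"
proof -
  have f: "f \<in> Hom K A B" and g: "g \<in> Hom K B C"
    using dist_hom d by auto
  have A: "A \<in> Ob K" and B: "B \<in> Ob K" and C: "C \<in> Ob K"
    using f g hom_dom hom_cod by blast+
  define x where "x = madd K (cmp K f r) (cmp K s g)"
  have fr: "cmp K f r \<in> Hom K B B" and sg: "cmp K s g \<in> Hom K B B"
    using cmp_hom f g r(1) s(1) by blast+
  have x: "x \<in> Hom K B B"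
    using add_hom[OF fr sg] unfolding x_def .
  have id_x: "madd K (idm K B) (mneg K x) \<in> Hom K B B"
    using add_hom[OF idm_hom[OF B] neg_hom[OF x]] .
  \<comment> \<open>\<open>id - x\<close> kills \<open>f\<close>, so factors through \<open>g\<close>; as it also kills the section \<open>s\<close> of \<open>g\<close>, it is zero\<close>
  have "cmp K x f = f"
    using cmp_add_right[OF fr sg f] cmp_assoc[OF f r(1) f] cmp_assoc[OF f g s(1)] r(2)
      dist_cmp_zero[OF d] idm_right[OF f] cmp_zero_right[OF s(1) A] add_zero[OF f]
    unfolding x_def by simp
  then have "cmp K (madd K (idm K B) (mneg K x)) f = mzero K A B"
    using cmp_diff_right[OF idm_hom[OF B] x f] idm_left[OF f] add_neg[OF f] by simp
  then obtain e where e: "e \<in> Hom K C B" "cmp K e g = madd K (idm K B) (mneg K x)"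
    using dist_weak_cokernel[OF d id_x] by blast
  have "cmp K x s = s"
    using cmp_add_right[OF fr sg s(1)] cmp_assoc[OF s(1) r(1) f] cmp_assoc[OF s(1) g s(1)] s(2,3)
      idm_right[OF s(1)] cmp_zero_right[OF f C] add_zero_left[OF s(1)]
    unfolding x_def by simp
  then have "e = mzero K C B"
    using cmp_assoc[OF s(1) g e(1)] e(2) s(2) idm_right[OF e(1)] cmp_diff_right[OF idm_hom[OF B] x s(1)]
      idm_left[OF s(1)] add_neg[OF s(1)] by simp
  then have "madd K (idm K B) (mneg K x) = mzero K B B"
    using e(2) cmp_zero_left[OF g B] by simp
  then have "x = idm K B"
    using eq_of_diff_eq_zero[OF idm_hom[OF B] x] by simp
  then show ?thesis
    unfolding is_biprod_def x_def using f g r s dist_cmp_zero[OF d] by simp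
qed

lemma subcat_retract:
  assumes "subcat K P" and "Y \<in> P"
    and "s \<in> Hom K X Y" and "r \<in> Hom K Y X" and "cmp K r s = idm K X"
  shows "X \<in> P"
proof -
  obtain C g h where d: "dist K X Y C s g h"
    using TR1_ex[OF assms(3)] by blast
  obtain s' where "s' \<in> Hom K C Y" "cmp K g s' = idm K C" "cmp K r s' = mzero K C X"
    using dist_split_mono_section[OF d assms(4,5)] by blast
  then have "is_biprod K X C Y s s' r g"
    using dist_split_mono_biprod[OF d assms(4,5)] by blast
  then show ?thesis
    using assms(1,2) unfolding subcat_def by blast
qed

section \<open>Orthogonality and cotorsion pairs\<close>

lemma isomorphic_refl: "X \<in> Ob K \<Longrightarrow> isomorphic K X X"
  unfolding isomorphic_def is_iso_def using idm_hom idm_left by blast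

lemma isomorphic_sym: "isomorphic K X Y \<Longrightarrow> isomorphic K Y X"
  unfolding isomorphic_def is_iso_def by blast

lemma zero_objs_isomorphic:
  assumes "is_zero_obj K Z1" and "is_zero_obj K Z2"
  shows "isomorphic K Z1 Z2"
proof -
  have Z: "Z1 \<in> Ob K" "Z2 \<in> Ob K"
    using assms unfolding is_zero_obj_def by auto
  have "cmp K (mzero K Z2 Z1) (mzero K Z1 Z2) = idm K Z1"
    using cmp_zero_left[OF zero_hom[OF Z] Z(1)] assms(1) unfolding is_zero_obj_def by simp
  moreover have "cmp K (mzero K Z1 Z2) (mzero K Z2 Z1) = idm K Z2"
    using cmp_zero_left[OF zero_hom[OF Z(2,1)] Z(2)] assms(2) unfolding is_zero_obj_def by simp
  ultimately show ?thesis
    unfolding isomorphic_def is_iso_def using zero_hom Z by blast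
qed

lemma subcat_Int:
  assumes "subcat K A" and "subcat K B"
  shows "subcat K (A \<inter> B)"
proof -
  obtain Z1 where "Z1 \<in> A" "is_zero_obj K Z1"
    using assms(1) unfolding subcat_def by blast
  moreover obtain Z2 where "Z2 \<in> B" "is_zero_obj K Z2"
    using assms(2) unfolding subcat_def by blast
  ultimately have "Z1 \<in> A \<inter> B" "is_zero_obj K Z1"
    using assms(2) zero_objs_isomorphic unfolding subcat_def by blast+
  then show ?thesis
    using assms unfolding subcat_def by auto
qed

lemma hom_zero_iso_cod:
  assumes x: "x \<in> Hom K X Y'" and "isomorphic K Y Y'"
    and zero: "\<forall>\<phi> \<in> Hom K X Y. \<phi> = mzero K X Y"
  shows "x = mzero K X Y'"
proof -
  obtain e e' where e: "e \<in> Hom K Y Y'" "e' \<in> Hom K Y' Y" "cmp K e e' = idm K Y'"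
    using assms(2) unfolding isomorphic_def is_iso_def by blast
  have "x = cmp K e (cmp K e' x)"
    using e(3) idm_left[OF x] cmp_assoc[OF x e(2) e(1)] by simp
  also have "\<dots> = mzero K X Y'"
    using zero cmp_hom[OF x e(2)] cmp_zero_right[OF e(1) hom_dom[OF x]] by simp
  finally show ?thesis .
qed

lemma hom_zero_iso_dom:
  assumes x: "x \<in> Hom K X' Y" and "isomorphic K X X'"
    and zero: "\<forall>\<phi> \<in> Hom K X Y. \<phi> = mzero K X Y"
  shows "x = mzero K X' Y"
proof -
  obtain e e' where e: "e \<in> Hom K X X'" "e' \<in> Hom K X' X" "cmp K e e' = idm K X'"
    using assms(2) unfolding isomorphic_def is_iso_def by blast
  have "x = cmp K (cmp K x e) e'"
    using e(3) idm_right[OF x] cmp_assoc[OF e(2) e(1) x] by simp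
  also have "\<dots> = mzero K X' Y"
    using zero cmp_hom[OF e(1) x] cmp_zero_left[OF e(2) hom_cod[OF x]] by simp
  finally show ?thesis .
qed

lemma ext1_zeroD:
  "\<lbrakk>ext1_zero K M N; X \<in> M; Y \<in> N; \<phi> \<in> Hom K X (shO K Y)\<rbrakk> \<Longrightarrow> \<phi> = mzero K X (shO K Y)"
  unfolding ext1_zero_def by blast

lemma cotorsion_pair_left_iff:
  assumes cp: "cotorsion_pair K U V" and X: "X \<in> Ob K"
  shows "X \<in> U \<longleftrightarrow> (\<forall>V' \<in> V. \<forall>\<phi> \<in> Hom K X (shO K V'). \<phi> = mzero K X (shO K V'))"
proof
  assume "X \<in> U"
  then show "\<forall>V' \<in> V. \<forall>\<phi> \<in> Hom K X (shO K V'). \<phi> = mzero K X (shO K V')"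
    using cp ext1_zeroD unfolding cotorsion_pair_def by blast
next
  assume orth: "\<forall>V' \<in> V. \<forall>\<phi> \<in> Hom K X (shO K V'). \<phi> = mzero K X (shO K V')"
  obtain U1 B f g h where U1: "U1 \<in> U" "B \<in> shift_sub K V" and d: "dist K U1 X B f g h"
    using cp X unfolding cotorsion_pair_def ext_star_def by blast
  obtain V1 where V1: "V1 \<in> V" "isomorphic K (shO K V1) B"
    using U1(2) unfolding shift_sub_def by blast
  have f: "f \<in> Hom K U1 X" and g: "g \<in> Hom K X B"
    using dist_hom d by auto
  have "cmp K g (idm K X) = mzero K X B"
    using hom_zero_iso_cod[OF g V1(2)] orth V1(1) idm_right[OF g] by simp
  then obtain \<psi> where "\<psi> \<in> Hom K X U1" "cmp K f \<psi> = idm K X"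
    using dist_weak_kernel[OF d idm_hom[OF X]] by blast
  then show "X \<in> U"
    using subcat_retract f U1(1) cp unfolding cotorsion_pair_def by blast
qed

lemma cotorsion_pair_left_ext_closed:
  assumes cp: "cotorsion_pair K U V" and d: "dist K A B C f g h"
    and "A \<in> U" and "C \<in> U"
  shows "B \<in> U"
proof -
  have f: "f \<in> Hom K A B" and g: "g \<in> Hom K B C"
    using dist_hom d by auto
  have A: "\<forall>V' \<in> V. \<forall>\<phi> \<in> Hom K A (shO K V'). \<phi> = mzero K A (shO K V')"
    and C: "\<forall>V' \<in> V. \<forall>\<phi> \<in> Hom K C (shO K V'). \<phi> = mzero K C (shO K V')"
    using cotorsion_pair_left_iff[OF cp] assms(3,4) hom_dom[OF f] hom_cod[OF g] by blast+
  have "\<phi> = mzero K B (shO K V')" if V': "V' \<in> V" and \<phi>: "\<phi> \<in> Hom K B (shO K V')" for V' \<phi>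
  proof -
    have "cmp K \<phi> f = mzero K A (shO K V')"
      using A V' cmp_hom[OF f \<phi>] by blast
    then obtain \<psi> where "\<psi> \<in> Hom K C (shO K V')" "cmp K \<psi> g = \<phi>"
      using dist_weak_cokernel[OF d \<phi>] by blast
    then show ?thesis
      using C V' cmp_zero_left[OF g hom_cod[OF \<phi>]] by auto
  qed
  then show ?thesis
    using cotorsion_pair_left_iff[OF cp hom_cod[OF f]] by blast
qed

lemma ext1_zero_subset_left:
  assumes "cotorsion_pair K U V" and "M \<subseteq> Ob K" and "ext1_zero K M V"
  shows "M \<subseteq> U"
  using assms cotorsion_pair_left_iff ext1_zeroD by blast

section \<open>The ideal quotient\<close>

lemma factors_through_zero:
  assumes "subcat K W" and X: "X \<in> Ob K" and Y: "Y \<in> Ob K"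
  shows "factors_through K W X Y (mzero K X Y)"
proof -
  obtain Z0 where Z0: "Z0 \<in> W" "is_zero_obj K Z0"
    using assms(1) unfolding subcat_def by blast
  then have "Z0 \<in> Ob K"
    unfolding is_zero_obj_def by blast
  then show ?thesis
    unfolding factors_through_def
    using Z0(1) zero_hom X Y cmp_zero_left[OF zero_hom[OF X \<open>Z0 \<in> Ob K\<close>] Y] by metis
qed

lemma factors_through_neg:
  assumes "factors_through K W X Y f"
  shows "factors_through K W X Y (mneg K f)"
proof -
  obtain W1 p q where "W1 \<in> W" "p \<in> Hom K X W1" "q \<in> Hom K W1 Y" "f = cmp K q p"
    using assms unfolding factors_through_def by blast
  then show ?thesis
    unfolding factors_through_def using cmp_neg_left neg_hom by metis
qed

lemma factors_through_add:
  assumes W: "subcat K W"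
    and f: "factors_through K W X Y f" and g: "factors_through K W X Y g"
  shows "factors_through K W X Y (madd K f g)"
proof -
  obtain W1 p1 q1 where w1: "W1 \<in> W" "p1 \<in> Hom K X W1" "q1 \<in> Hom K W1 Y" "f = cmp K q1 p1"
    using f unfolding factors_through_def by blast
  obtain W2 p2 q2 where w2: "W2 \<in> W" "p2 \<in> Hom K X W2" "q2 \<in> Hom K W2 Y" "g = cmp K q2 p2"
    using g unfolding factors_through_def by blast
  obtain P i1 i2 \<pi>1 \<pi>2 where bp: "is_biprod K W1 W2 P i1 i2 \<pi>1 \<pi>2"
    using biprod_ex hom_cod[OF w1(2)] hom_cod[OF w2(2)] by blast
  have P: "P \<in> W"
    using W bp w1(1) w2(1) unfolding subcat_def by blast
  have b: "i1 \<in> Hom K W1 P" "i2 \<in> Hom K W2 P" "\<pi>1 \<in> Hom K P W1" "\<pi>2 \<in> Hom K P W2"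
     "cmp K \<pi>1 i1 = idm K W1" "cmp K \<pi>2 i2 = idm K W2"
     "cmp K \<pi>1 i2 = mzero K W2 W1" "cmp K \<pi>2 i1 = mzero K W1 W2"
    using bp unfolding is_biprod_def by auto
  define p where "p = madd K (cmp K i1 p1) (cmp K i2 p2)"
  define q where "q = madd K (cmp K q1 \<pi>1) (cmp K q2 \<pi>2)"
  have ip: "cmp K i1 p1 \<in> Hom K X P" "cmp K i2 p2 \<in> Hom K X P"
    and q\<pi>: "cmp K q1 \<pi>1 \<in> Hom K P Y" "cmp K q2 \<pi>2 \<in> Hom K P Y"
    using cmp_hom w1 w2 b by blast+
  have p: "p \<in> Hom K X P" and q: "q \<in> Hom K P Y"
    using add_hom ip q\<pi> unfolding p_def q_def by blast+
  have "cmp K q i1 = q1"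
    using cmp_add_right[OF q\<pi> b(1)] cmp_assoc[OF b(1) b(3) w1(3)] cmp_assoc[OF b(1) b(4) w2(3)]
      b(5,8) idm_right[OF w1(3)] cmp_zero_right[OF w2(3) hom_dom[OF w1(3)]] add_zero[OF w1(3)]
    unfolding q_def by simp
  moreover have "cmp K q i2 = q2"
    using cmp_add_right[OF q\<pi> b(2)] cmp_assoc[OF b(2) b(3) w1(3)] cmp_assoc[OF b(2) b(4) w2(3)]
      b(6,7) idm_right[OF w2(3)] cmp_zero_right[OF w1(3) hom_dom[OF w2(3)]] add_zero_left[OF w2(3)]
    unfolding q_def by simp
  ultimately have "cmp K q p = madd K f g"
    using cmp_add_left[OF ip q] cmp_assoc[OF w1(2) b(1) q] cmp_assoc[OF w2(2) b(2) q] w1(4) w2(4)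
    unfolding p_def by simp
  then show ?thesis
    unfolding factors_through_def using P p q by metis
qed

lemma quot_eq_refl:
  assumes "subcat K W" and "f \<in> Hom K X Y"
  shows "quot_eq K W X Y f f"
  unfolding quot_eq_def
  using add_neg[OF assms(2)] factors_through_zero[OF assms(1) hom_dom[OF assms(2)] hom_cod[OF assms(2)]]
  by simp

lemma quot_eq_trans:
  assumes "subcat K W" and "f \<in> Hom K X Y" "g \<in> Hom K X Y" "h \<in> Hom K X Y"
    and "quot_eq K W X Y f g" and "quot_eq K W X Y g h"
  shows "quot_eq K W X Y f h"
  using factors_through_add[OF assms(1)] assms(5,6) diff_add_diff[OF assms(2-4)]
  unfolding quot_eq_def by metis

lemma quot_eq_sym:
  assumes "f \<in> Hom K X Y" "g \<in> Hom K X Y" and "quot_eq K W X Y f g"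
  shows "quot_eq K W X Y g f"
proof -
  have "madd K (madd K f (mneg K g)) (madd K g (mneg K f)) = mzero K X Y"
    using diff_add_diff[OF assms(1,2,1)] add_neg[OF assms(1)] by simp
  then have "madd K g (mneg K f) = mneg K (madd K f (mneg K g))"
    using neg_unique add_hom neg_hom assms(1,2) by metis
  then show ?thesis
    using factors_through_neg assms(3) unfolding quot_eq_def by metis
qed

lemma quot_eq_imp_eq:
  assumes "\<forall>W' \<in> W. \<forall>\<chi> \<in> Hom K W' Y. \<chi> = mzero K W' Y"
    and f: "f \<in> Hom K X Y" and g: "g \<in> Hom K X Y" and "quot_eq K W X Y f g"
  shows "f = g"
proof -
  obtain W1 p q where "W1 \<in> W" "p \<in> Hom K X W1" "q \<in> Hom K W1 Y"
    "madd K f (mneg K g) = cmp K q p"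
    using assms(4) unfolding quot_eq_def factors_through_def by blast
  then have "madd K f (mneg K g) = mzero K X Y"
    using assms(1) cmp_zero_left hom_cod[OF f] by metis
  then show ?thesis
    using eq_of_diff_eq_zero[OF f g] by simp
qed

lemma quot_zero_obj_hom_zero:
  assumes "quot_zero_obj K W X" and h: "h \<in> Hom K X Y"
    and "\<forall>W' \<in> W. \<forall>\<chi> \<in> Hom K W' Y. \<chi> = mzero K W' Y"
  shows "h = mzero K X Y"
proof -
  have X: "X \<in> Ob K"
    using hom_dom[OF h] .
  obtain W1 p q where W1: "W1 \<in> W" "p \<in> Hom K X W1" "q \<in> Hom K W1 X"
    "madd K (idm K X) (mneg K (mzero K X X)) = cmp K q p"
    using assms(1) unfolding quot_zero_obj_def quot_eq_def factors_through_def by blast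
  then have "idm K X = cmp K q p"
    using neg_zero[OF X X] add_zero[OF idm_hom[OF X]] by simp
  then have "h = cmp K (cmp K h q) p"
    using idm_right[OF h] cmp_assoc[OF W1(2,3) h] by simp
  also have "\<dots> = mzero K X Y"
    using assms(3) W1 cmp_hom[OF W1(3) h] cmp_zero_left[OF W1(2) hom_cod[OF h]] by simp
  finally show ?thesis .
qed

lemma quot_zero_obj_of_unit_factors:
  assumes W: "subcat K W" and adj: "left_adjoint_incl K W Cp tau eta"
    and C: "C \<in> Ob K" and fac: "factors_through K W C (tau C) (eta C)"
  shows "quot_zero_obj K W (tau C)"
proof -
  have eta: "eta C \<in> Hom K C (tau C)" and tau: "tau C \<in> Cp"
    using adj C unfolding left_adjoint_incl_def by blast+
  have X: "tau C \<in> Ob K"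
    using hom_cod[OF eta] .
  obtain g where g: "g \<in> Hom K (tau C) (tau C)"
    and unique: "\<forall>g' \<in> Hom K (tau C) (tau C). quot_eq K W C (tau C) (cmp K g' (eta C)) (eta C)
                   \<longrightarrow> quot_eq K W (tau C) (tau C) g' g"
    using adj C tau eta unfolding left_adjoint_incl_def by blast
  have "quot_eq K W C (tau C) (cmp K (idm K (tau C)) (eta C)) (eta C)"
    using quot_eq_refl[OF W eta] idm_left[OF eta] by simp
  then have id: "quot_eq K W (tau C) (tau C) (idm K (tau C)) g"
    using unique idm_hom[OF X] by blast
  have "quot_eq K W C (tau C) (cmp K (mzero K (tau C) (tau C)) (eta C)) (eta C)"
    using factors_through_neg[OF fac] cmp_zero_left[OF eta X] add_zero_left[OF neg_hom[OF eta]]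
    unfolding quot_eq_def by simp
  then have zero: "quot_eq K W (tau C) (tau C) (mzero K (tau C) (tau C)) g"
    using unique zero_hom[OF X X] by blast
  show ?thesis
    unfolding quot_zero_obj_def
    using X quot_eq_trans[OF W idm_hom[OF X] g zero_hom[OF X X] id
        quot_eq_sym[OF zero_hom[OF X X] g zero]] by blast
qed

section \<open>The cone of \<open>a \<circ> b\<close> and the reflection \<open>\<tau>\<^sup>+\<close>\<close>

lemma cotorsion_pair_left_of_cone:
  assumes cp: "cotorsion_pair K U V"
    and d: "dist K X C Z (cmp K a b) z w"
    and b: "b \<in> Hom K X U0" and a: "a \<in> Hom K U0 C" and "U0 \<in> U" and "Z \<in> U"
  shows "C \<in> U"
proof -
  have z: "z \<in> Hom K C Z"
    using dist_hom d by blast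
  have "\<phi> = mzero K C (shO K V')" if V': "V' \<in> V" and \<phi>: "\<phi> \<in> Hom K C (shO K V')" for V' \<phi>
  proof -
    have "cmp K \<phi> a = mzero K U0 (shO K V')"
      using cotorsion_pair_left_iff[OF cp hom_dom[OF a]] \<open>U0 \<in> U\<close> V' cmp_hom[OF a \<phi>] by blast
    then have "cmp K \<phi> (cmp K a b) = mzero K X (shO K V')"
      using cmp_assoc[OF b a \<phi>] cmp_zero_left[OF b hom_cod[OF \<phi>]] by simp
    then obtain \<psi> where "\<psi> \<in> Hom K Z (shO K V')" "cmp K \<psi> z = \<phi>"
      using dist_weak_cokernel[OF d \<phi>] by blast
    then show ?thesis
      using cotorsion_pair_left_iff[OF cp hom_cod[OF z]] \<open>Z \<in> U\<close> V' cmp_zero_left[OF z hom_cod[OF \<phi>]]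
      by auto
  qed
  then show ?thesis
    using cotorsion_pair_left_iff[OF cp hom_dom[OF z]] by blast
qed

lemma octahedral_cone_retract:
  assumes tr1: "dist K V0 U0 C v a (mzero K C (shO K V0))"
    and tr2: "dist K S U0 T0 b t s"
    and tr3: "dist K S C Z (cmp K a b) z w"
    and orth: "\<forall>\<phi> \<in> Hom K S V0. \<phi> = mzero K S V0"
  shows "\<exists>u \<in> Hom K T0 Z. \<exists>r \<in> Hom K Z T0. cmp K u r = idm K Z"
proof -
  have v: "v \<in> Hom K V0 U0" and b: "b \<in> Hom K S U0" and t: "t \<in> Hom K U0 T0"
    using dist_hom tr1 tr2 by auto
  obtain r where r: "r \<in> Hom K U0 V0" "cmp K r v = idm K V0"
    using dist_split_mono_of_zero[OF tr1] by blast
  have "cmp K r b = mzero K S V0"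
    using orth cmp_hom[OF b r(1)] by blast
  then obtain \<rho> where \<rho>: "\<rho> \<in> Hom K T0 V0" "cmp K \<rho> t = r"
    using dist_weak_cokernel[OF tr2 r(1)] by blast
  obtain u v' where d: "dist K T0 Z (shO K V0) u v' (cmp K (shM K t) (mneg K (shM K v)))"
    using TR4[OF tr2 dist_rotate[OF tr1] tr3] by blast
  have u: "u \<in> Hom K T0 Z" and v': "v' \<in> Hom K Z (shO K V0)"
    using dist_hom d by auto
  have Z: "Z \<in> Ob K"
    using hom_cod[OF u] .
  have vv': "cmp K (shM K v) v' \<in> Hom K Z (shO K U0)"
    using cmp_hom[OF v' sh_hom[OF v]] .
  have "mneg K (cmp K (shM K t) (cmp K (shM K v) v')) = mzero K Z (shO K T0)"
    using dist_cmp_zero[OF dist_rotate[OF d]] cmp_assoc[OF v' neg_hom[OF sh_hom[OF v]] sh_hom[OF t]]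
      cmp_neg_left[OF sh_hom[OF v] v'] cmp_neg_right[OF sh_hom[OF t] vv'] by simp
  then have tvv': "cmp K (shM K t) (cmp K (shM K v) v') = mzero K Z (shO K T0)"
    using neg_neg[OF cmp_hom[OF vv' sh_hom[OF t]]] neg_zero[OF Z hom_cod[OF sh_hom[OF t]]] by metis
  have "v' = cmp K (shM K (cmp K \<rho> (cmp K t v))) v'"
    using cmp_assoc[OF v t \<rho>(1)] \<rho>(2) r(2) sh_idm[OF hom_dom[OF v]] idm_left[OF v'] by simp
  also have "\<dots> = cmp K (shM K \<rho>) (cmp K (shM K t) (cmp K (shM K v) v'))"
    using sh_cmp[OF v t] sh_cmp[OF cmp_hom[OF v t] \<rho>(1)]
      cmp_assoc[OF v' sh_hom[OF v] sh_hom[OF t]]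
      cmp_assoc[OF v' cmp_hom[OF sh_hom[OF v] sh_hom[OF t]] sh_hom[OF \<rho>(1)]]
    by simp
  also have "\<dots> = mzero K Z (shO K V0)"
    using tvv' cmp_zero_right[OF sh_hom[OF \<rho>(1)] Z] by simp
  finally have "cmp K v' (idm K Z) = mzero K Z (shO K V0)"
    using idm_right[OF v'] by simp
  then obtain r' where "r' \<in> Hom K Z T0" "cmp K u r' = idm K Z"
    using dist_weak_kernel[OF d idm_hom[OF Z]] by blast
  then show ?thesis
    using u by blast
qed

lemma twin_cone_in_core:
  assumes twin: "twin_cotorsion_pair K S T U V"
    and tr1: "V0 \<in> V" "dist K V0 U0 C v a c"
    and tr2: "isomorphic K (shO K S0') S0" "S0 \<in> S" "T0 \<in> T" "dist K S0' U0 T0 b t s"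
    and tr3: "dist K S0' C Z (cmp K a b) z w"
    and C: "C \<in> U"
  shows "Z \<in> T \<inter> U"
proof -
  have ST: "cotorsion_pair K S T" and UV: "cotorsion_pair K U V" and SV: "ext1_zero K S V"
    using twin unfolding twin_cotorsion_pair_def by auto
  have subS: "subcat K S" and subT: "subcat K T" and subU: "subcat K U" and subV: "subcat K V"
    using ST UV unfolding cotorsion_pair_def by auto
  have S': "S0' \<in> Ob K" and V0: "V0 \<in> Ob K" and c: "c \<in> Hom K C (shO K V0)"
    using dist_hom tr1(2) tr2(4) hom_dom by blast+
  have "S \<subseteq> U"
    using ext1_zero_subset_left[OF UV _ SV] subS unfolding subcat_def by blast
  then have "shO K S0' \<in> U"
    using tr2(1,2) isomorphic_sym subU unfolding subcat_def by blast
  then have ZU: "Z \<in> U"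
    using cotorsion_pair_left_ext_closed[OF UV dist_rotate[OF tr3] C] by blast
  have "c = mzero K C (shO K V0)"
    using ext1_zeroD[OF _ C tr1(1) c] UV unfolding cotorsion_pair_def by blast
  moreover have "\<forall>\<phi> \<in> Hom K S0' V0. \<phi> = mzero K S0' V0"
  proof (rule hom_zero_of_sh_hom_zero[OF S' V0])
    show "\<forall>\<phi> \<in> Hom K (shO K S0') (shO K V0). \<phi> = mzero K (shO K S0') (shO K V0)"
      using hom_zero_iso_dom[OF _ isomorphic_sym[OF tr2(1)]] ext1_zeroD[OF SV tr2(2) tr1(1)] by blast
  qed
  ultimately obtain u r where "u \<in> Hom K T0 Z" "r \<in> Hom K Z T0" "cmp K u r = idm K Z"
    using octahedral_cone_retract[OF _ tr2(4) tr3] tr1(2) by blast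
  then have "Z \<in> T"
    using subcat_retract[OF subT tr2(3)] by blast
  with ZU show ?thesis
    by blast
qed

lemma left_of_reflection_zero:
  assumes cp: "cotorsion_pair K U V" and W: "subcat K W" "W \<subseteq> U"
    and adj: "left_adjoint_incl K W (ext_star K W (shift_sub K V)) tau eta"
    and C: "C \<in> Ob K" and zero: "quot_zero_obj K W (tau C)"
  shows "C \<in> U"
proof -
  have eta: "eta C \<in> Hom K C (tau C)"
    using adj C unfolding left_adjoint_incl_def by blast
  obtain Z0 where Z0: "Z0 \<in> W" "is_zero_obj K Z0"
    using W(1) unfolding subcat_def by blast
  have "\<phi> = mzero K C (shO K V')" if V': "V' \<in> V" and \<phi>: "\<phi> \<in> Hom K C (shO K V')" for V' \<phi>
  proof -
    have Y: "shO K V' \<in> Ob K"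
      using hom_cod[OF \<phi>] .
    have W_Y: "\<forall>W' \<in> W. \<forall>\<chi> \<in> Hom K W' (shO K V'). \<chi> = mzero K W' (shO K V')"
      using W(2) V' ext1_zeroD cp unfolding cotorsion_pair_def by blast
    have "shO K V' \<in> ext_star K W (shift_sub K V)"
      unfolding ext_star_def shift_sub_def
      using Z0 V' isomorphic_refl[OF Y] dist_zero_left[OF Y Z0(2)] by blast
    then obtain g where g: "g \<in> Hom K (tau C) (shO K V')"
      "quot_eq K W C (shO K V') (cmp K g (eta C)) \<phi>"
      using adj C \<phi> unfolding left_adjoint_incl_def by blast
    have "g = mzero K (tau C) (shO K V')"
      using quot_zero_obj_hom_zero[OF zero g(1) W_Y] .
    then have "quot_eq K W C (shO K V') (mzero K C (shO K V')) \<phi>"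
      using g(2) cmp_zero_left[OF eta Y] by simp
    then show ?thesis
      using quot_eq_imp_eq[OF W_Y zero_hom[OF C Y] \<phi>] by simp
  qed
  then show ?thesis
    using cotorsion_pair_left_iff[OF cp C] by blast
qed

lemma reflection_zero_of_left:
  assumes cp: "cotorsion_pair K U V" and W: "subcat K W"
    and adj: "left_adjoint_incl K W (ext_star K W (shift_sub K V)) tau eta"
    and C: "C \<in> U"
  shows "quot_zero_obj K W (tau C)"
proof -
  have C_ob: "C \<in> Ob K"
    using cp C unfolding cotorsion_pair_def subcat_def by auto
  have "tau C \<in> ext_star K W (shift_sub K V)" and eta: "eta C \<in> Hom K C (tau C)"
    using adj C_ob unfolding left_adjoint_incl_def by blast+
  then obtain W1 B f g h where W1: "W1 \<in> W" "B \<in> shift_sub K V"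
    and d: "dist K W1 (tau C) B f g h"
    unfolding ext_star_def by blast
  obtain V1 where V1: "V1 \<in> V" "isomorphic K (shO K V1) B"
    using W1(2) unfolding shift_sub_def by blast
  have f: "f \<in> Hom K W1 (tau C)" and g: "g \<in> Hom K (tau C) B"
    using dist_hom d by auto
  have "cmp K g (eta C) = mzero K C B"
    using hom_zero_iso_cod[OF cmp_hom[OF eta g] V1(2)] C V1(1) cotorsion_pair_left_iff[OF cp C_ob]
    by blast
  then obtain p where "p \<in> Hom K C W1" "cmp K f p = eta C"
    using dist_weak_kernel[OF d eta] by blast
  then have "factors_through K W C (tau C) (eta C)"
    unfolding factors_through_def using W1(1) f by metis
  then show ?thesis
    by (rule quot_zero_obj_of_unit_factors[OF W adj C_ob])
qed

end

theorem lemma3p9: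
  fixes K :: "('o, 'm) tcat"
    and S T U V :: "'o set"
    and tau :: "'o \<Rightarrow> 'o" and eta :: "'o \<Rightarrow> 'm"
  assumes tri: "triangulated K"
    and twin: "twin_cotorsion_pair K S T U V"
    and adj: "left_adjoint_incl K (T \<inter> U)
               (ext_star K (T \<inter> U) (shift_sub K V)) tau eta"
    and C: "C \<in> Ob K"
    and tr1: "V0 \<in> V" "U0 \<in> U" "dist K V0 U0 C v a c"
    and tr2: "isomorphic K (shO K S0') S0" "S0 \<in> S" "T0 \<in> T" "dist K S0' U0 T0 b t s"
    and tr3: "dist K S0' C Z (cmp K a b) z w"
  shows "(quot_zero_obj K (T \<inter> U) (tau C) \<longleftrightarrow> Z \<in> T \<inter> U) \<and>
         (Z \<in> T \<inter> U \<longleftrightarrow> C \<in> U)"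
proof -
  interpret triangulated K
    by (rule tri)
  have ST: "cotorsion_pair K S T" and UV: "cotorsion_pair K U V"
    using twin unfolding twin_cotorsion_pair_def by auto
  have W: "subcat K (T \<inter> U)"
    using subcat_Int ST UV unfolding cotorsion_pair_def by blast
  have a: "a \<in> Hom K U0 C" and b: "b \<in> Hom K S0' U0"
    using dist_hom tr1(3) tr2(4) by auto
  have "quot_zero_obj K (T \<inter> U) (tau C) \<Longrightarrow> C \<in> U"
    using left_of_reflection_zero[OF UV W _ adj C] by blast
  moreover have "C \<in> U \<Longrightarrow> quot_zero_obj K (T \<inter> U) (tau C)"
    using reflection_zero_of_left[OF UV W adj] by blast
  moreover have "C \<in> U \<Longrightarrow> Z \<in> T \<inter> U"
    using twin_cone_in_core[OF twin tr1(1,3) tr2 tr3] by blast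
  moreover have "Z \<in> T \<inter> U \<Longrightarrow> C \<in> U"
    using cotorsion_pair_left_of_cone[OF UV tr3 b a tr1(2)] by blast
  ultimately show ?thesis
    by blast
qed

end
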